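(* Let $p\ge5$ be a prime with Legendre symbol $\left(\frac{-3}{p}\right)=-1$. Then for all integers $n,k\ge0$ with $p\nmid n$, $$b\!\left(3p^{2k+1}n+\frac{p^{2k+2}-1}{2}\right)\equiv 0\pmod 2.$$
   Context: The mock theta function $\mathcal{B}(q)=\sum_{n\ge0}\frac{q^n(-q;q^2)_n}{(q;q^2)_{n+1}}=\sum_{n\ge0}b(n)q^n$, where $(a;q)_n=\prod_{j=0}^{n-1}(1-aq^j)$. *)

theory Defs
  imports "HOL-Computational_Algebra.Formal_Power_Series" "HOL-Number_Theory.Number_Theory"
begin

definition qpoch :: "rat fps \<Rightarrow> rat fps \<Rightarrow> nat \<Rightarrow> rat fps" where
  "qpoch a q n = (\<Prod>j<n. 1 - a * q ^ j)"

definition mockB_term :: "nat \<Rightarrow> rat fps" where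
  "mockB_term n = fps_X ^ n * qpoch (- fps_X) (fps_X ^ 2) n
                   * inverse (qpoch fps_X (fps_X ^ 2) (Suc n))"

text \<open>Coefficient of q^m of the (formally convergent) sum over n >= 0:
  only the summands with n <= m contribute.\<close>
definition b :: "nat \<Rightarrow> rat" where
  "b m = (\<Sum>n\<le>m. fps_nth (mockB_term n) m)"

end

theory Submission
  imports Defs "HOL-Library.Z2" "HOL-Library.Disjoint_Sets"
begin

unbundle fps_syntax

text \<open>
  Modulo 2 we have \<open>(-q;q\<^sup>2)\<^sub>n \<equiv> (q;q\<^sup>2)\<^sub>n\<close>, so the \<open>n\<close>-th summand of \<open>\<B>(q)\<close> is congruent to
  \<open>q\<^sup>n / (1 - q\<^bsup>2n+1\<^esup>)\<close> and \<open>b(m)\<close> is congruent to the number of \<open>n \<le> m\<close> with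
  \<open>2n+1 | m-n\<close>, which is the number of divisors of \<open>2m+1\<close>. Pairing each divisor \<open>d\<close>
  with \<open>(2m+1)/d\<close> shows that this number is even unless \<open>2m+1\<close> is a square. For
  \<open>m = 3p\<^bsup>2k+1\<^esup>n + (p\<^bsup>2k+2\<^esup>-1)/2\<close> we get \<open>2m+1 = p\<^bsup>2k+1\<^esup>(6n+p)\<close> with \<open>p \<nmid> 6n+p\<close>,
  so \<open>p\<close> divides \<open>2m+1\<close> to an odd power.
\<close>

definition int_coeffs :: "'a::comm_ring_1 fps \<Rightarrow> bool" where
  "int_coeffs f \<longleftrightarrow> (\<forall>i. f $ i \<in> \<int>)"

definition even_coeffs :: "'a::comm_ring_1 fps \<Rightarrow> bool" where
  "even_coeffs f \<longleftrightarrow> (\<exists>g. int_coeffs g \<and> f = 2 * g)"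

lemma int_coeffs_1 [simp]: "int_coeffs 1"
  by (simp add: int_coeffs_def fps_one_nth)

lemma int_coeffs_X [simp]: "int_coeffs fps_X"
  by (simp add: int_coeffs_def fps_X_def)

lemma int_coeffs_add: "int_coeffs f \<Longrightarrow> int_coeffs g \<Longrightarrow> int_coeffs (f + g)"
  by (simp add: int_coeffs_def)

lemma int_coeffs_diff: "int_coeffs f \<Longrightarrow> int_coeffs g \<Longrightarrow> int_coeffs (f - g)"
  by (simp add: int_coeffs_def)

lemma int_coeffs_mult [intro]: "int_coeffs f \<Longrightarrow> int_coeffs g \<Longrightarrow> int_coeffs (f * g)"
  unfolding int_coeffs_def fps_mult_nth by (auto intro!: Ints_sum Ints_mult)

lemma int_coeffs_power: "int_coeffs f \<Longrightarrow> int_coeffs (f ^ n)"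
  by (induction n) auto

lemma int_coeffs_prod: "(\<And>x. x \<in> A \<Longrightarrow> int_coeffs (f x)) \<Longrightarrow> int_coeffs (\<Prod>x\<in>A. f x)"
  by (induction A rule: infinite_finite_induct) auto

lemma int_coeffs_inverse:
  fixes f :: "'a::field fps"
  assumes "int_coeffs f" and "f $ 0 = 1"
  shows "int_coeffs (inverse f)"
proof -
  have "fps_right_inverse_constructor f 1 n \<in> \<int>" for n
  proof (induction n rule: less_induct)
    case (less n)
    show ?case
    proof (cases n)
      case (Suc m)
      have "fps_right_inverse_constructor f 1 n
              = - (\<Sum>i=1..n. f $ i * fps_right_inverse_constructor f 1 (n - i))"
        using Suc by (simp only: fps_right_inverse_constructor.simps(2) mult_minus1)
      moreover have "(\<Sum>i=1..n. f $ i * fps_right_inverse_constructor f 1 (n - i)) \<in> \<int>"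
        using less assms(1) unfolding int_coeffs_def
        by (intro Ints_sum Ints_mult) (auto simp: Suc)
      ultimately show ?thesis
        by simp
    qed simp
  qed
  then show ?thesis
    using assms(2) by (simp add: int_coeffs_def fps_inverse_def)
qed

lemma even_coeffs_double: "int_coeffs g \<Longrightarrow> even_coeffs (2 * g)"
  by (auto simp: even_coeffs_def)

lemma even_coeffs_0 [simp]: "even_coeffs 0"
  using even_coeffs_double[of 0] by (simp add: int_coeffs_def)

lemma even_coeffs_add [intro]: "even_coeffs f \<Longrightarrow> even_coeffs g \<Longrightarrow> even_coeffs (f + g)"
  unfolding even_coeffs_def by (metis distrib_left int_coeffs_add)

lemma even_coeffs_mult: "even_coeffs f \<Longrightarrow> int_coeffs g \<Longrightarrow> even_coeffs (f * g)"
  unfolding even_coeffs_def by (metis int_coeffs_mult mult.assoc)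

lemma even_coeffs_sum: "(\<And>x. x \<in> A \<Longrightarrow> even_coeffs (f x)) \<Longrightarrow> even_coeffs (\<Sum>x\<in>A. f x)"
  by (induction A rule: infinite_finite_induct) auto

lemma even_coeffs_nth:
  assumes "even_coeffs f"
  shows "\<exists>z. f $ i = of_int (2 * z)"
proof -
  obtain g where "int_coeffs g" and "f = 2 * g"
    using assms by (auto simp: even_coeffs_def)
  moreover from \<open>int_coeffs g\<close> obtain z where "g $ i = of_int z"
    by (meson Ints_cases int_coeffs_def)
  ultimately have "f $ i = of_int (2 * z)"
    by (simp add: fps_numeral_fps_const)
  then show ?thesis ..
qed

lemma even_coeffs_prod_plus_minus_prod_minus:
  fixes x :: "nat \<Rightarrow> 'a::comm_ring_1 fps"
  assumes "\<And>j. int_coeffs (x j)"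
  shows "even_coeffs ((\<Prod>j<n. 1 + x j) - (\<Prod>j<n. 1 - x j))"
proof (induction n)
  case 0
  then show ?case
    by simp
next
  case (Suc n)
  define P where "P = (\<Prod>j<n. 1 + x j)"
  define Q where "Q = (\<Prod>j<n. 1 - x j)"
  have "P * (1 + x n) - Q * (1 - x n) = (P - Q) * (1 + x n) + 2 * (Q * x n)"
    by (simp add: algebra_simps)
  moreover have "even_coeffs ((P - Q) * (1 + x n))"
    unfolding P_def Q_def by (intro even_coeffs_mult int_coeffs_add int_coeffs_1 Suc.IH assms)
  moreover have "even_coeffs (2 * (Q * x n))"
    unfolding Q_def
    by (intro even_coeffs_double int_coeffs_mult int_coeffs_prod int_coeffs_diff int_coeffs_1 assms)
  ultimately show ?case
    by (simp add: P_def Q_def even_coeffs_add)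
qed

definition fps_multiples :: "nat \<Rightarrow> 'a::comm_ring_1 fps" where
  "fps_multiples k = Abs_fps (\<lambda>i. if k dvd i then 1 else 0)"

lemma fps_multiples_mult_one_minus_X_power:
  assumes "k > 0"
  shows "fps_multiples k * (1 - fps_X ^ k) = (1 :: 'a::comm_ring_1 fps)"
proof (rule fps_ext)
  fix i
  have "(fps_multiples k * (1 - fps_X ^ k)) $ i
          = fps_multiples k $ i - (fps_X ^ k * fps_multiples k) $ i"
    by (simp add: algebra_simps mult.commute)
  also have "\<dots> = (1 :: 'a fps) $ i"
    using assms
    by (auto simp: fps_X_power_mult_nth fps_multiples_def dvd_imp_le dest: dvd_minus_self[THEN iffD1])
  finally show "(fps_multiples k * (1 - fps_X ^ k)) $ i = (1 :: 'a fps) $ i" .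
qed

lemma fps_X_power_mult_fps_multiples_nth:
  "(fps_X ^ n * fps_multiples k) $ m = (if n \<le> m \<and> k dvd (m - n) then 1 else 0)"
  by (simp add: fps_X_power_mult_nth fps_multiples_def)

lemma qpoch_Suc: "qpoch a q (Suc n) = qpoch a q n * (1 - a * q ^ n)"
  by (simp add: qpoch_def)

lemma qpoch_nth_0: "a $ 0 = 0 \<Longrightarrow> qpoch a q n $ 0 = 1"
  by (induction n) (simp_all add: qpoch_Suc qpoch_def)

lemma int_coeffs_qpoch: "int_coeffs a \<Longrightarrow> int_coeffs q \<Longrightarrow> int_coeffs (qpoch a q n)"
  unfolding qpoch_def
  by (intro int_coeffs_prod int_coeffs_diff int_coeffs_mult int_coeffs_power int_coeffs_1)

lemma even_coeffs_qpoch_uminus_diff: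
  assumes "int_coeffs a" and "int_coeffs q"
  shows "even_coeffs (qpoch (- a) q n - qpoch a q n)"
  using even_coeffs_prod_plus_minus_prod_minus[of "\<lambda>j. a * q ^ j" n] assms
  by (simp add: qpoch_def int_coeffs_mult int_coeffs_power)

lemma mockB_term_mod_2: "even_coeffs (mockB_term n - fps_X ^ n * fps_multiples (2 * n + 1))"
proof -
  let ?Q = "qpoch fps_X (fps_X ^ 2)"
  let ?I = "inverse (?Q (Suc n))"
  have Q_I: "?Q (Suc n) * ?I = 1"
    by (rule inverse_mult_eq_1') (simp add: qpoch_nth_0)
  have "fps_X * (fps_X ^ 2) ^ n = (fps_X ^ (2 * n + 1) :: rat fps)"
    by (simp add: power_mult[symmetric])
  then have multiples_Q: "fps_multiples (2 * n + 1) * ?Q (Suc n) = ?Q n"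
    using fps_multiples_mult_one_minus_X_power[of "2 * n + 1", where 'a = rat]
    by (simp add: qpoch_Suc mult.commute mult.left_commute)
  have "mockB_term n - fps_X ^ n * fps_multiples (2 * n + 1)
          = fps_X ^ n * qpoch (- fps_X) (fps_X ^ 2) n * ?I
            - fps_X ^ n * fps_multiples (2 * n + 1) * (?Q (Suc n) * ?I)"
    by (simp only: mockB_term_def Q_I mult_1_right)
  also have "\<dots> = fps_X ^ n * qpoch (- fps_X) (fps_X ^ 2) n * ?I - fps_X ^ n * ?Q n * ?I"
    by (simp only: mult.assoc flip: multiples_Q)
  also have "\<dots> = (qpoch (- fps_X) (fps_X ^ 2) n - ?Q n) * (fps_X ^ n * ?I)"
    by (simp only: left_diff_distrib right_diff_distrib mult.assoc mult.commute mult.left_commute)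
  moreover have "even_coeffs ((qpoch (- fps_X) (fps_X ^ 2) n - ?Q n) * (fps_X ^ n * ?I))"
    by (intro even_coeffs_mult even_coeffs_qpoch_uminus_diff int_coeffs_mult int_coeffs_power
        int_coeffs_inverse int_coeffs_qpoch int_coeffs_X qpoch_nth_0) simp_all
  ultimately show ?thesis
    by simp
qed

lemma card_divisors_odd:
  fixes m :: nat
  shows "card {d. d dvd 2 * m + 1} = card {n. n \<le> m \<and> (2 * n + 1) dvd (m - n)}"
proof -
  have dvd_iff: "(2 * n + 1) dvd (2 * m + 1) \<longleftrightarrow> (2 * n + 1) dvd (m - n)" if "n \<le> m" for n
  proof -
    have "2 * m + 1 = 2 * (m - n) + (2 * n + 1)"
      using that by simp
    then have "(2 * n + 1) dvd (2 * m + 1) \<longleftrightarrow> (2 * n + 1) dvd 2 * (m - n)"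
      by (simp only: dvd_add_left_iff[OF dvd_refl])
    also have "\<dots> \<longleftrightarrow> (2 * n + 1) dvd (m - n)"
      by (simp add: coprime_dvd_mult_right_iff)
    finally show ?thesis .
  qed
  have "{d. d dvd 2 * m + 1} = (\<lambda>n. 2 * n + 1) ` {n. n \<le> m \<and> (2 * n + 1) dvd (m - n)}"
  proof (intro equalityI subsetI)
    fix d assume "d \<in> {d. d dvd 2 * m + 1}"
    then have d: "d dvd 2 * m + 1"
      by simp
    then have "d \<le> 2 * m + 1" and "odd d"
      using dvd_imp_le dvd_trans[of 2 d "2 * m + 1"] by auto
    with d show "d \<in> (\<lambda>n. 2 * n + 1) ` {n. n \<le> m \<and> (2 * n + 1) dvd (m - n)}"
      using dvd_iff[of "d div 2"] by (intro image_eqI[of _ _ "d div 2"]) auto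
  next
    fix d assume "d \<in> (\<lambda>n. 2 * n + 1) ` {n. n \<le> m \<and> (2 * n + 1) dvd (m - n)}"
    then obtain n where "n \<le> m" and "(2 * n + 1) dvd (m - n)" and "d = 2 * n + 1"
      by auto
    then show "d \<in> {d. d dvd 2 * m + 1}"
      using dvd_iff[of n] by simp
  qed
  then show ?thesis
    by (simp add: card_image inj_on_def)
qed

lemma b_mod_2_card_divisors: "\<exists>z. b m = of_nat (card {d. d dvd 2 * m + 1}) + of_int (2 * z)"
proof -
  define G :: "nat \<Rightarrow> rat fps" where "G n = fps_X ^ n * fps_multiples (2 * n + 1)" for n
  have "even_coeffs (\<Sum>n\<le>m. mockB_term n - G n)"
    unfolding G_def by (intro even_coeffs_sum mockB_term_mod_2)
  then obtain z where z: "(\<Sum>n\<le>m. mockB_term n - G n) $ m = of_int (2 * z)"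
    by (meson even_coeffs_nth)
  have "(\<Sum>n\<le>m. G n $ m) = (\<Sum>n\<in>{n. n \<le> m \<and> (2 * n + 1) dvd (m - n)}. 1)"
    by (rule sum.mono_neutral_cong_right) (auto simp: G_def fps_X_power_mult_fps_multiples_nth)
  then have "b m = of_nat (card {d. d dvd 2 * m + 1}) + (\<Sum>n\<le>m. mockB_term n - G n) $ m"
    unfolding card_divisors_odd by (simp add: b_def fps_sum_nth sum_subtractf)
  with z show ?thesis
    by auto
qed

lemma even_card_involution:
  assumes "\<And>x. x \<in> X \<Longrightarrow> h x \<in> X"
    and "\<And>x. x \<in> X \<Longrightarrow> h (h x) = x"
    and "\<And>x. x \<in> X \<Longrightarrow> h x \<noteq> x"
  shows "even (card X)"
proof -
  have "(\<Sum>x\<in>X. 1 :: bit) = 0"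
    using assms by (intro sum_involution_eq_0[where h = h]) simp_all
  then show ?thesis
    by (metis even_of_nat_iff even_zero mult.right_neutral sum_constant)
qed

lemma even_card_divisors_nonsquare:
  fixes N :: nat
  assumes "N > 0" and "\<And>d. d * d \<noteq> N"
  shows "even (card {d. d dvd N})"
proof (rule even_card_involution[where h = "\<lambda>d. N div d"])
  fix d assume "d \<in> {d. d dvd N}"
  then obtain e where "N = d * e"
    by auto
  with assms show "N div d \<in> {d. d dvd N}" and "N div (N div d) = d" and "N div d \<noteq> d"
    by auto
qed

lemma b_even_if_nonsquare:
  assumes "\<And>d. d * d \<noteq> 2 * m + 1"
  shows "\<exists>z. b m = of_int (2 * z)"
proof -
  have "even (card {d. d dvd 2 * m + 1})"
    using assms by (intro even_card_divisors_nonsquare) simp_all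
  then obtain c where c: "card {d. d dvd 2 * m + 1} = 2 * c"
    by (rule evenE)
  obtain z where "b m = of_nat (card {d. d dvd 2 * m + 1}) + of_int (2 * z)"
    using b_mod_2_card_divisors by blast
  then have "b m = of_int (2 * (int c + z))"
    using c by simp
  then show ?thesis ..
qed

lemma nonsquare_if_odd_multiplicity:
  fixes N d :: nat
  assumes "prime p" and "odd (multiplicity p N)"
  shows "d * d \<noteq> N"
proof
  assume "d * d = N"
  moreover have "d \<noteq> 0"
    using assms(2) calculation by (metis even_zero mult_0 multiplicity_zero)
  ultimately have "multiplicity p N = 2 * multiplicity p d"
    using assms(1) by (auto simp: prime_elem_multiplicity_mult_distrib)
  with assms(2) show False
    by simp
qed

theorem theorem1p4:
  fixes p :: nat
  assumes "prime p" and "p \<ge> 5" and "Legendre (-3) (int p) = -1"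
  shows "\<forall>n k :: nat. \<not> p dvd n \<longrightarrow>
           (\<exists>m :: int. b (3 * p ^ (2*k+1) * n + (p ^ (2*k+2) - 1) div 2) = of_int (2 * m))"
proof (intro allI impI)
  fix n k :: nat
  assume "\<not> p dvd n"
  have "\<not> p dvd 6"
  proof
    assume "p dvd 6"
    then have "p dvd 2 \<or> p dvd 3"
      using assms(1) prime_dvd_mult_iff[of p 2 3] by simp
    with assms(2) show False
      by (auto dest: dvd_imp_le)
  qed
  with assms(1) \<open>\<not> p dvd n\<close> have "\<not> p dvd 6 * n + p"
    by (simp add: prime_dvd_mult_iff)
  define m where "m = 3 * p ^ (2*k+1) * n + (p ^ (2*k+2) - 1) div 2"
  have "odd p"
    using assms(1,2) by (intro prime_odd_nat) auto
  then have "2 * m + 1 = p ^ (2*k+1) * (6 * n + p)"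
    unfolding m_def by (simp add: algebra_simps odd_pos flip: power_Suc)
  then have "multiplicity p (2 * m + 1) = 2 * k + 1"
    using \<open>\<not> p dvd 6 * n + p\<close> by (rule multiplicity_decomposeI) (use assms(1) in auto)
  then have "d * d \<noteq> 2 * m + 1" for d
    using nonsquare_if_odd_multiplicity[OF assms(1)] by simp
  then show "\<exists>m'. b (3 * p ^ (2*k+1) * n + (p ^ (2*k+2) - 1) div 2) = of_int (2 * m')"
    unfolding m_def by (rule b_even_if_nonsquare)
qed

end
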